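(* Let $G=(V,A)$ and $\mathfrak n=\mathfrak n(G)$ be as below. If $\omega=\sum_{e\in V,\alpha\in A}\lambda_{e,\alpha}\,e\wedge\alpha\in(W\wedge\mathfrak z)^{\mathfrak n}$, then $\lambda_{e,\alpha}=0$ for every $\alpha\in A$ and every vertex $e$ with $|e|\ge 2$.
   Context: $G=(V,A)$ is a finite simple graph without loops and without isolated vertices, with vertices $V=\{e_1,\dots,e_n\}$ ordered; each edge $\alpha$ joining $e_i,e_j$ with $i<j$ is oriented from $e_i$ to $e_j$. The graph algebra $\mathfrak n(G)$ over a field $k$ of characteristic zero has basis $V\cup A$ with $[e_i,e_j]=\alpha$ if $\alpha$ goes from $e_i$ to $e_j$, $[e_i,e_j]=0$ if $e_i,e_j$ are not adjacent, and all edges central; $\mathfrak z=\mathrm{span}(A)$ is its center and $W=\mathrm{span}(V)$. $|e|$ is the degree of $e$. Invariants are with respect to $\mathrm{ad}_x(a\wedge b)=[x,a]\wedge b+a\wedge[x,b]$. *)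

theory Defs
  imports Main
begin

text \<open>An edge joining i < j is represented by the pair (i,j), oriented from i to j.
  Basis of n(G): Inl v for vertices, Inr (i,j) for edges.
  Vectors of n(G) are coefficient functions on the basis (zero off the basis);
  elements of the exterior square are represented as alternating coefficient
  functions w p q (the standard identification of the exterior square with
  alternating 2-tensors), with a wedge b given by a p * b q - a q * b p.\<close>

definition graph_ok :: "'v set \<Rightarrow> ('v \<Rightarrow> 'v \<Rightarrow> bool) \<Rightarrow> bool" where
  "graph_ok V E \<longleftrightarrow> finite V \<and> (\<forall>u v. E u v \<longrightarrow> u \<in> V \<and> v \<in> V)
     \<and> (\<forall>u v. E u v \<longrightarrow> E v u) \<and> (\<forall>v. \<not> E v v) \<and> (\<forall>v\<in>V. \<exists>u. E v u)"

definition edges :: "'v::linorder set \<Rightarrow> ('v \<Rightarrow> 'v \<Rightarrow> bool) \<Rightarrow> ('v \<times> 'v) set" where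
  "edges V E = {(i, j). i \<in> V \<and> j \<in> V \<and> i < j \<and> E i j}"

definition gbasis :: "'v::linorder set \<Rightarrow> ('v \<Rightarrow> 'v \<Rightarrow> bool) \<Rightarrow> ('v + 'v \<times> 'v) set" where
  "gbasis V E = Inl ` V \<union> Inr ` edges V E"

definition degree :: "'v set \<Rightarrow> ('v \<Rightarrow> 'v \<Rightarrow> bool) \<Rightarrow> 'v \<Rightarrow> nat" where
  "degree V E e = card {u \<in> V. E e u}"

definition bvec :: "'b \<Rightarrow> 'b \<Rightarrow> 'k::field" where
  "bvec b = (\<lambda>z. if z = b then 1 else 0)"

definition brb :: "('v::linorder \<Rightarrow> 'v \<Rightarrow> bool) \<Rightarrow> 'v + 'v \<times> 'v \<Rightarrow> 'v + 'v \<times> 'v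
                    \<Rightarrow> ('v + 'v \<times> 'v) \<Rightarrow> 'k::field" where
  "brb E a b = (case (a, b) of
      (Inl i, Inl j) \<Rightarrow>
         (if E i j \<and> i < j then bvec (Inr (i, j))
          else if E i j \<and> j < i then (\<lambda>z. - bvec (Inr (j, i)) z)
          else (\<lambda>z. 0))
    | _ \<Rightarrow> (\<lambda>z. 0))"

definition galg :: "'v::linorder set \<Rightarrow> ('v \<Rightarrow> 'v \<Rightarrow> bool) \<Rightarrow> ('v + 'v \<times> 'v \<Rightarrow> 'k::field) set" where
  "galg V E = {x. \<forall>b. b \<notin> gbasis V E \<longrightarrow> x b = 0}"

definition gbracket :: "'v::linorder set \<Rightarrow> ('v \<Rightarrow> 'v \<Rightarrow> bool)
    \<Rightarrow> ('v + 'v \<times> 'v \<Rightarrow> 'k::field) \<Rightarrow> ('v + 'v \<times> 'v \<Rightarrow> 'k) \<Rightarrow> ('v + 'v \<times> 'v \<Rightarrow> 'k)" where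
  "gbracket V E x y = (\<lambda>z. \<Sum>a\<in>gbasis V E. \<Sum>b\<in>gbasis V E. x a * y b * brb E a b z)"

definition wedge :: "('b \<Rightarrow> 'k::field) \<Rightarrow> ('b \<Rightarrow> 'k) \<Rightarrow> 'b \<Rightarrow> 'b \<Rightarrow> 'k" where
  "wedge a b = (\<lambda>p q. a p * b q - a q * b p)"

text \<open>ad_x on the exterior square: the linear extension of
  a wedge b |-> [x,a] wedge b + a wedge [x,b].\<close>
definition ad2 :: "'v::linorder set \<Rightarrow> ('v \<Rightarrow> 'v \<Rightarrow> bool) \<Rightarrow> ('v + 'v \<times> 'v \<Rightarrow> 'k::field)
    \<Rightarrow> ('v + 'v \<times> 'v \<Rightarrow> 'v + 'v \<times> 'v \<Rightarrow> 'k) \<Rightarrow> ('v + 'v \<times> 'v \<Rightarrow> 'v + 'v \<times> 'v \<Rightarrow> 'k)" where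
  "ad2 V E x w = (\<lambda>p q. (\<Sum>r\<in>gbasis V E. gbracket V E x (bvec r) p * w r q)
                      + (\<Sum>r\<in>gbasis V E. gbracket V E x (bvec r) q * w p r))"

definition invariant2 :: "'v::linorder set \<Rightarrow> ('v \<Rightarrow> 'v \<Rightarrow> bool)
    \<Rightarrow> ('v + 'v \<times> 'v \<Rightarrow> 'v + 'v \<times> 'v \<Rightarrow> 'k::field) \<Rightarrow> bool" where
  "invariant2 V E w \<longleftrightarrow> (\<forall>x\<in>galg V E. ad2 V E x w = (\<lambda>p q. 0))"

end

theory Submission imports Defs begin

text \<open>Apply the invariance of \<omega> under ad(e_u) for a vertex u and read off the
  coefficient of \<beta> \<wedge> \<alpha> for two edges \<beta>, \<alpha>. Writing [e_u, e_c] = s(u,c) uc with the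
  sign s = orientation, this gives s(u,c) \<lambda>(c,ud) = s(u,d) \<lambda>(d,uc) for neighbours c, d of u, and
  s(u,c) \<lambda>(c,\<alpha>) = 0 when u is not an endpoint of \<alpha>. Hence \<lambda>(e,\<alpha>) vanishes as soon as e
  has a neighbour off \<alpha>. Otherwise, if |e| \<ge> 2, the neighbours of e are exactly the
  endpoints of \<alpha>, so e and \<alpha> span a triangle, and going once around the three relations
  of the triangle returns \<lambda>(e,\<alpha>) with the opposite sign.\<close>

definition edge_between :: "'v::linorder \<Rightarrow> 'v \<Rightarrow> 'v \<times> 'v" where
  "edge_between u v = (min u v, max u v)"

definition orientation :: "'v::linorder \<Rightarrow> 'v \<Rightarrow> 'k::field" where
  "orientation u v = (if u < v then 1 else -1)"

definition vertex_edge_form :: "'v::linorder set \<Rightarrow> ('v \<Rightarrow> 'v \<Rightarrow> bool)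
    \<Rightarrow> ('v \<Rightarrow> 'v \<times> 'v \<Rightarrow> 'k::field) \<Rightarrow> ('v + 'v \<times> 'v \<Rightarrow> 'v + 'v \<times> 'v \<Rightarrow> 'k)" where
  "vertex_edge_form V E lam = (\<lambda>p q. \<Sum>e\<in>V. \<Sum>\<alpha>\<in>edges V E.
      lam e \<alpha> * wedge (bvec (Inl e)) (bvec (Inr \<alpha>)) p q)"

lemma edge_between_commute: "edge_between u v = edge_between v u"
  by (auto simp: edge_between_def min_def max_def)

lemma orientation_commute: "u \<noteq> v \<Longrightarrow> orientation v u = - (orientation u v :: 'k::field)"
  by (auto simp: orientation_def)

lemma orientation_mult_self: "orientation u v * orientation u v = (1::'k::field)"
  by (simp add: orientation_def)

lemma orientation_nonzero: "orientation u v \<noteq> (0::'k::field)"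
  by (simp add: orientation_def)

lemma finite_edges: "finite V \<Longrightarrow> finite (edges V E)"
  by (rule finite_subset[of _ "V \<times> V"]) (auto simp: edges_def)

lemma finite_gbasis: "finite V \<Longrightarrow> finite (gbasis V E)"
  by (simp add: gbasis_def finite_edges)

lemma sum_gbasis:
  assumes "finite V"
  shows "(\<Sum>r\<in>gbasis V E. f r) = (\<Sum>e\<in>V. f (Inl e)) + (\<Sum>\<alpha>\<in>edges V E. f (Inr \<alpha>))"
proof -
  have "(\<Sum>r\<in>gbasis V E. f r) = (\<Sum>r\<in>Inl ` V. f r) + (\<Sum>r\<in>Inr ` edges V E. f r)"
    unfolding gbasis_def using assms finite_edges by (intro sum.union_disjoint) auto
  then show ?thesis
    by (simp add: sum.reindex)
qed

lemma edge_between_in_edges: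
  assumes "graph_ok V E" "E u v"
  shows "edge_between u v \<in> edges V E"
proof -
  have "u \<in> V" "v \<in> V" "E v u" "u \<noteq> v"
    using assms unfolding graph_ok_def by metis+
  then show ?thesis
    using assms(2) by (cases "u < v") (auto simp: edge_between_def edges_def min_def max_def)
qed

lemma gbracket_bvec:
  assumes "finite V" "a \<in> gbasis V E" "b \<in> gbasis V E"
  shows "gbracket V E (bvec a) (bvec b) z = (brb E a b z :: 'k::field)"
proof -
  have "gbracket V E (bvec a) (bvec b) z = (\<Sum>a'\<in>gbasis V E. \<Sum>b'\<in>gbasis V E.
      if a' = a then if b' = b then (brb E a' b' z :: 'k) else 0 else 0)"
    unfolding gbracket_def bvec_def by (intro sum.cong refl) auto
  also have "\<dots> = (\<Sum>a'\<in>gbasis V E. if a' = a then brb E a b z else 0)"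
    using assms finite_gbasis[OF assms(1)] by (intro sum.cong refl) (simp add: sum.delta')
  finally show ?thesis
    using assms finite_gbasis[OF assms(1)] by (simp add: sum.delta')
qed

lemma brb_Inl_Inl_Inr:
  "brb E (Inl u) (Inl e) (Inr \<gamma>) = (if E u e \<and> u < e \<and> \<gamma> = (u, e) then 1
     else if E u e \<and> e < u \<and> \<gamma> = (e, u) then -1 else (0::'k::field))"
  unfolding brb_def bvec_def by auto

lemma brb_Inr_right: "brb E a (Inr \<gamma>) z = 0"
  unfolding brb_def by (cases a) auto

lemma sum_brb_edge_between:
  assumes "graph_ok V E" "E u c"
  shows "(\<Sum>e\<in>V. brb E (Inl u) (Inl e) (Inr (edge_between u c)) * f e)
           = orientation u c * (f c :: 'k::field)"
proof -
  have "finite V" "c \<in> V" "u \<noteq> c" "E c u"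
    using assms unfolding graph_ok_def by metis+
  then have "(\<Sum>e\<in>V. brb E (Inl u) (Inl e) (Inr (edge_between u c)) * f e) =
        (\<Sum>e\<in>V. if e = c then orientation u c * f c else 0)"
    using assms(2) by (intro sum.cong refl)
      (auto simp: brb_Inl_Inl_Inr orientation_def edge_between_def min_def max_def)
  with \<open>finite V\<close> \<open>c \<in> V\<close> show ?thesis
    by (simp add: sum.delta')
qed

lemma sum_brb_not_incident:
  assumes "u \<noteq> i" "u \<noteq> j"
  shows "(\<Sum>e\<in>V. brb E (Inl u) (Inl e) (Inr (i, j)) * f e) = (0 :: 'k::field)"
  using assms by (intro sum.neutral ballI) (simp add: brb_Inl_Inl_Inr)

lemma vertex_edge_form_Inl_Inr:
  assumes "finite V"
  shows "vertex_edge_form V E lam (Inl e) (Inr \<alpha>)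
           = (if e \<in> V \<and> \<alpha> \<in> edges V E then lam e \<alpha> else 0)"
proof -
  have "vertex_edge_form V E lam (Inl e) (Inr \<alpha>) = (\<Sum>e'\<in>V. \<Sum>\<alpha>'\<in>edges V E.
          if e' = e then if \<alpha>' = \<alpha> then lam e \<alpha> else 0 else 0)"
    unfolding vertex_edge_form_def wedge_def bvec_def by (intro sum.cong refl) simp
  also have "\<dots> = (\<Sum>e'\<in>V. if e' = e then if \<alpha> \<in> edges V E then lam e \<alpha> else 0 else 0)"
    using finite_edges[OF assms] by (intro sum.cong refl) (simp add: sum.delta')
  finally show ?thesis
    using assms by (simp add: sum.delta')
qed

lemma vertex_edge_form_Inr_Inl:
  assumes "finite V"
  shows "vertex_edge_form V E lam (Inr \<alpha>) (Inl e)
           = - (if e \<in> V \<and> \<alpha> \<in> edges V E then lam e \<alpha> else 0)"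
proof -
  have "vertex_edge_form V E lam (Inr \<alpha>) (Inl e) = - vertex_edge_form V E lam (Inl e) (Inr \<alpha>)"
    unfolding vertex_edge_form_def wedge_def by (simp add: sum_negf[symmetric] algebra_simps)
  then show ?thesis
    by (simp only: vertex_edge_form_Inl_Inr[OF assms])
qed

lemma vertex_edge_form_Inr_Inr: "vertex_edge_form V E lam (Inr \<beta>) (Inr \<alpha>) = 0"
  unfolding vertex_edge_form_def wedge_def bvec_def by simp

lemma ad2_vertex_edge_form_Inr_Inr:
  assumes "finite V" "u \<in> V" "\<alpha> \<in> edges V E" "\<beta> \<in> edges V E"
  shows "ad2 V E (bvec (Inl u)) (vertex_edge_form V E lam) (Inr \<beta>) (Inr \<alpha>) =
    (\<Sum>e\<in>V. brb E (Inl u) (Inl e) (Inr \<beta>) * lam e \<alpha>)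
      - (\<Sum>e\<in>V. brb E (Inl u) (Inl e) (Inr \<alpha>) * (lam e \<beta> :: 'k::field))"
proof -
  have u: "Inl u \<in> gbasis V E"
    using assms(2) by (simp add: gbasis_def)
  have "ad2 V E (bvec (Inl u)) (vertex_edge_form V E lam) (Inr \<beta>) (Inr \<alpha>) =
      (\<Sum>r\<in>gbasis V E. brb E (Inl u) r (Inr \<beta>) * vertex_edge_form V E lam r (Inr \<alpha>))
    + (\<Sum>r\<in>gbasis V E. brb E (Inl u) r (Inr \<alpha>) * vertex_edge_form V E lam (Inr \<beta>) r)"
    unfolding ad2_def by (intro arg_cong2[where f="(+)"] sum.cong refl)
      (simp_all add: gbracket_bvec[OF assms(1) u])
  then show ?thesis
    using assms
    by (simp add: sum_gbasis brb_Inr_right vertex_edge_form_Inl_Inr vertex_edge_form_Inr_Inl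
        vertex_edge_form_Inr_Inr sum_negf cong: sum.cong)
qed

lemma invariant_vertex_edge_form_relation:
  fixes lam :: "'v::linorder \<Rightarrow> 'v \<times> 'v \<Rightarrow> 'k::field"
  assumes "finite V" "invariant2 V E (vertex_edge_form V E lam)"
    and "u \<in> V" "\<alpha> \<in> edges V E" "\<beta> \<in> edges V E"
  shows "(\<Sum>e\<in>V. brb E (Inl u) (Inl e) (Inr \<beta>) * lam e \<alpha>)
           = (\<Sum>e\<in>V. brb E (Inl u) (Inl e) (Inr \<alpha>) * (lam e \<beta> :: 'k::field))"
proof -
  have "bvec (Inl u) \<in> (galg V E :: ('v + 'v \<times> 'v \<Rightarrow> 'k) set)"
    using assms(3) by (auto simp: galg_def gbasis_def bvec_def)
  then have "ad2 V E (bvec (Inl u)) (vertex_edge_form V E lam) (Inr \<beta>) (Inr \<alpha>) = 0"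
    using assms(2) unfolding invariant2_def by simp
  then show ?thesis
    using ad2_vertex_edge_form_Inr_Inr[OF assms(1,3-5), of lam] by simp
qed

lemma invariant_coeff_zero_if_neighbour_off_edge:
  assumes "graph_ok V E" "invariant2 V E (vertex_edge_form V E lam)"
    and "(i, j) \<in> edges V E" "E c u" "u \<noteq> i" "u \<noteq> j"
  shows "lam c (i, j) = (0 :: 'k::field)"
proof -
  have "finite V" "u \<in> V" "E u c"
    using assms(1,4) unfolding graph_ok_def by metis+
  then have "(\<Sum>e\<in>V. brb E (Inl u) (Inl e) (Inr (edge_between u c)) * lam e (i, j))
      = (\<Sum>e\<in>V. brb E (Inl u) (Inl e) (Inr (i, j)) * lam e (edge_between u c))"
    using invariant_vertex_edge_form_relation[OF _ assms(2) _ assms(3)]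
      edge_between_in_edges[OF assms(1)] by blast
  then have "orientation u c * lam c (i, j) = 0"
    by (simp only: sum_brb_edge_between[OF assms(1) \<open>E u c\<close>] sum_brb_not_incident[OF assms(5,6)])
  then show ?thesis
    by (simp add: orientation_nonzero)
qed

lemma invariant_signed_coeff_swap:
  assumes "graph_ok V E" "invariant2 V E (vertex_edge_form V E lam)" "E u c" "E u d"
  shows "orientation u d * lam c (edge_between u d)
           = orientation u c * (lam d (edge_between u c) :: 'k::field)"
proof -
  have "finite V" "u \<in> V"
    using assms(1,3) unfolding graph_ok_def by metis+
  then have "(\<Sum>e\<in>V. brb E (Inl u) (Inl e) (Inr (edge_between u c)) * lam e (edge_between u d))
      = (\<Sum>e\<in>V. brb E (Inl u) (Inl e) (Inr (edge_between u d)) * lam e (edge_between u c))"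
    using invariant_vertex_edge_form_relation[OF _ assms(2)]
      edge_between_in_edges[OF assms(1)] assms(3,4) by blast
  then have "orientation u c * lam c (edge_between u d) = orientation u d * lam d (edge_between u c)"
    by (simp only: sum_brb_edge_between[OF assms(1,3)] sum_brb_edge_between[OF assms(1,4)])
  moreover have "orientation u c * orientation u c = (1::'k)" "orientation u d * orientation u d = (1::'k)"
    by (simp_all add: orientation_mult_self)
  ultimately show ?thesis
    by algebra
qed

lemma invariant_coeff_zero_on_triangle:
  fixes lam :: "'v::linorder \<Rightarrow> 'v \<times> 'v \<Rightarrow> 'k::field_char_0"
  assumes "graph_ok V E" "invariant2 V E (vertex_edge_form V E lam)"
    and "E a b" "E b e" "E a e"
  shows "lam e (edge_between a b) = 0"
proof -
  define T where "T c u d = orientation u d * lam c (edge_between u d)" for c u d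
  have swap: "T c u d = T d u c" if "E u c" "E u d" for u c d
    using invariant_signed_coeff_swap[OF assms(1,2) that] by (simp add: T_def)
  have anti: "T c u d = - T c d u" if "E u d" for u c d
  proof -
    have "u \<noteq> d"
      using assms(1) that unfolding graph_ok_def by metis
    then show ?thesis
      by (simp add: T_def orientation_commute[of u d] edge_between_commute[of d u])
  qed
  have sym: "E b a" "E e b" "E e a"
    using assms(1,3-5) unfolding graph_ok_def by blast+
  have "T e a b = T b a e" using swap[OF assms(5,3)] .
  also have "\<dots> = - T b e a" using anti[OF assms(5)] .
  also have "\<dots> = - T a e b" using swap[OF sym(2,3)] by simp
  also have "\<dots> = T a b e" using anti[OF sym(2)] by simp
  also have "\<dots> = T e b a" using swap[OF sym(1) assms(4)] .
  also have "\<dots> = - T e a b" using anti[OF sym(1)] .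
  finally have "T e a b = 0"
    by simp
  then show ?thesis
    by (simp add: T_def orientation_nonzero)
qed

theorem mainTheorem9:
  fixes V :: "'v::linorder set" and E :: "'v \<Rightarrow> 'v \<Rightarrow> bool"
    and lam :: "'v \<Rightarrow> 'v \<times> 'v \<Rightarrow> 'k::field_char_0"
  assumes "graph_ok V E"
    and "invariant2 V E (\<lambda>p q. \<Sum>e\<in>V. \<Sum>\<alpha>\<in>edges V E.
            lam e \<alpha> * wedge (bvec (Inl e)) (bvec (Inr \<alpha>)) p q)"
  shows "\<forall>\<alpha>\<in>edges V E. \<forall>e\<in>V. 2 \<le> degree V E e \<longrightarrow> lam e \<alpha> = 0"
proof (intro ballI impI)
  fix \<alpha> e assume \<alpha>: "\<alpha> \<in> edges V E" and "e \<in> V" and deg: "2 \<le> degree V E e"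
  have inv: "invariant2 V E (vertex_edge_form V E lam)"
    using assms(2) unfolding vertex_edge_form_def .
  obtain a b where ab: "\<alpha> = (a, b)" "a < b" "E a b"
    using \<alpha> unfolding edges_def by auto
  show "lam e \<alpha> = 0"
  proof (cases "\<exists>u. E e u \<and> u \<noteq> a \<and> u \<noteq> b")
    case True
    then show ?thesis
      using invariant_coeff_zero_if_neighbour_off_edge[OF assms(1) inv] \<alpha> ab(1) by blast
  next
    case False
    have "finite {u \<in> V. E e u}"
      using assms(1) unfolding graph_ok_def by simp
    moreover have "\<not> card {u \<in> V. E e u} \<le> Suc 0"
      using deg unfolding degree_def by simp
    ultimately obtain u v where "u \<noteq> v" "E e u" "E e v"
      using card_le_Suc0_iff_eq by blast
    with False have "E e a" "E e b"
      by blast+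
    then have "E b e" "E a e"
      using assms(1) unfolding graph_ok_def by metis+
    then show ?thesis
      using invariant_coeff_zero_on_triangle[OF assms(1) inv ab(3)] ab
      by (simp add: edge_between_def)
  qed
qed

end
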